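(* Let $n,d,k$ be integers with $0\le k<d\le n$. The map $T\mapsto\mathfrak{b}(T)$ is a bijection from $\mathcal{T}(n,d,k)$ onto $\mathcal{B}(n,d,k)$, and both sets have cardinality $\binom{n-k-1}{d-k-1}$.
   Context: For a graph $G$, $S(G)$ is obtained by adding a new vertex adjacent to all vertices of $G$, and $D(G)$ by adding a new isolated vertex. For a word $w=w_1\cdots w_n$ over $\{S,D\}$ with $w_n=S$, the threshold graph with word $w$ is $w_1(w_2(\cdots w_n(\emptyset)\cdots))$, $\emptyset$ being the graph with no vertices; every threshold graph arises from exactly one such word. The $b$-vector $\mathfrak{b}(T)=(b_1,\ldots,b_d)$ of a threshold graph $T$ with word $w$ containing $d$ letters $S$: insert a separator right after every $S$ in $w$, cutting $w$ into $d$ consecutive subwords read left to right, and let $b_i$ be the length of the $i$-th subword. A graph is $k$-connected if it has at least $k$ vertices and removing any set of fewer than $k$ vertices leaves a connected graph (every graph is $0$-connected). $\mathcal{T}(n,d,k)$ is the set of $k$-connected threshold graphs on $n$ vertices with clique number $d$. $\mathcal{B}(n,d,k)$ is the set of vectors $(b_1,\ldots,b_d)$ of positive integers with $\sum_i b_i=n$ and $b_1=\cdots=b_k=1$. *)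

theory Defs
  imports Main
begin

(* Simple graphs: a vertex set together with a symmetric, irreflexive adjacency relation. *)
type_synonym graph = "nat set \<times> (nat \<Rightarrow> nat \<Rightarrow> bool)"

datatype letter = S | D

definition opS :: "nat \<Rightarrow> graph \<Rightarrow> graph" where
  "opS v G = (insert v (fst G),
     (\<lambda>x y. snd G x y \<or> (x = v \<and> y \<in> fst G) \<or> (y = v \<and> x \<in> fst G)))"

definition opD :: "nat \<Rightarrow> graph \<Rightarrow> graph" where
  "opD v G = (insert v (fst G), snd G)"

(* graph with word w = w_1 ... w_n is w_1(w_2(... w_n(empty))); the vertex added by the
   letter at list position i gets label (length w - 1 - i), which is fresh *)
fun thr :: "letter list \<Rightarrow> graph" where
  "thr [] = ({}, (\<lambda>_ _. False))"
| "thr (l # w) = (if l = S then opS (length w) (thr w) else opD (length w) (thr w))"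

definition threshold_word :: "letter list \<Rightarrow> bool" where
  "threshold_word w \<longleftrightarrow> w \<noteq> [] \<and> last w = S"

(* b-vector: cut after every S, record the lengths of the pieces *)
fun blocks :: "nat \<Rightarrow> letter list \<Rightarrow> nat list" where
  "blocks acc [] = []"
| "blocks acc (S # w) = (acc + 1) # blocks 0 w"
| "blocks acc (D # w) = blocks (acc + 1) w"

definition bvec :: "letter list \<Rightarrow> nat list" where
  "bvec w = blocks 0 w"

definition connected_on :: "(nat \<Rightarrow> nat \<Rightarrow> bool) \<Rightarrow> nat set \<Rightarrow> bool" where
  "connected_on E V \<longleftrightarrow>
     (\<forall>u\<in>V. \<forall>v\<in>V. (\<lambda>x y. x \<in> V \<and> y \<in> V \<and> E x y)\<^sup>*\<^sup>* u v)"

definition k_connected :: "graph \<Rightarrow> nat \<Rightarrow> bool" where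
  "k_connected G k \<longleftrightarrow> k \<le> card (fst G) \<and>
     (\<forall>X. X \<subseteq> fst G \<and> card X < k \<longrightarrow> connected_on (snd G) (fst G - X))"

definition is_clique :: "graph \<Rightarrow> nat set \<Rightarrow> bool" where
  "is_clique G C \<longleftrightarrow> C \<subseteq> fst G \<and> (\<forall>x\<in>C. \<forall>y\<in>C. x \<noteq> y \<longrightarrow> snd G x y)"

definition clique_number :: "graph \<Rightarrow> nat" where
  "clique_number G = Max {card C | C. is_clique G C}"

(* T(n,d,k), threshold graphs represented by their (unique) words *)
definition Tset :: "nat \<Rightarrow> nat \<Rightarrow> nat \<Rightarrow> letter list set" where
  "Tset n d k = {w. threshold_word w \<and> length w = n \<and>
      k_connected (thr w) k \<and> clique_number (thr w) = d}"

definition Bset :: "nat \<Rightarrow> nat \<Rightarrow> nat \<Rightarrow> nat list set" where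
  "Bset n d k = {b. length b = d \<and> (\<forall>i<d. 0 < b ! i) \<and> sum_list b = n \<and>
      (\<forall>i<k. b ! i = 1)}"

end

theory Submission
  imports Defs
begin

(* Label the vertices of thr w by 0, ..., length w - 1 in order of insertion, so vertex v is
   created by the letter rev w ! v.  Two vertices are adjacent iff the later one of them was
   created by an S.  From this description we derive, for a threshold word w:
     (1) the clique number of thr w is the number of letters S in w (the S-vertices form a
         clique, and any clique contains at most one D-vertex, added before all its other vertices);
     (2) thr w is k-connected iff the first k letters of w are S (then one of the k last
         vertices survives the removal of fewer than k vertices and dominates the rest; a D at
         position i < k becomes an isolated vertex once the i vertices added after it are
         removed).  Cutting a word after
   each S is inverted by re-expanding each block b into D^(b-1) S, which makes bvec a bijection
   onto B(n,d,k).  Finally a word is determined by its set of S-positions, which must contain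
   the k first positions and the last one; counting such sets gives the binomial coefficient. *)


section \<open>The graph of a word\<close>

lemma thr_vertices: "fst (thr w) = {..<length w}"
proof (induction w)
  case (Cons l w)
  then show ?case by (cases l) (simp_all add: opS_def opD_def lessThan_Suc)
qed simp

lemma thr_adjacent:
  "snd (thr w) x y \<longleftrightarrow> x < length w \<and> y < length w \<and> x \<noteq> y \<and> rev w ! max x y = S"
proof (induction w arbitrary: x y)
  case Nil
  then show ?case by simp
next
  case (Cons l w)
  define m where "m = length w"
  have rev_nth_Cons: "(rev w @ [l]) ! j = (if j < m then rev w ! j else l)" if "j < Suc m" for j
    using that unfolding m_def by (simp add: nth_append)
  have step: "snd (thr (l # w)) x y = (if l = S then snd (thr w) x y \<or> (x = m \<and> y < m) \<or> (y = m \<and> x < m)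
     else snd (thr w) x y)"
    using thr_vertices[of w] unfolding m_def by (simp add: opS_def opD_def)
  show ?case
  proof (cases "x < m \<and> y < m")
    case True
    then show ?thesis using Cons.IH[of x y] step rev_nth_Cons[of "max x y"] unfolding m_def
      by (simp add: max_def)
  next
    case False
    then have old: "\<not> snd (thr w) x y" using Cons.IH[of x y] unfolding m_def by auto
    show ?thesis
    proof (cases "x < Suc m \<and> y < Suc m \<and> x \<noteq> y")
      case True
      then have "max x y = m" using False by (auto simp: max_def)
      then show ?thesis using True False old step rev_nth_Cons[of m] unfolding m_def by (cases l) auto
    next
      case False
      then show ?thesis using old step unfolding m_def by auto
    qed
  qed
qed

lemma threshold_word_first_vertex: "threshold_word w \<Longrightarrow> rev w ! 0 = S"
  unfolding threshold_word_def by (metis hd_conv_nth hd_rev rev_is_Nil_conv)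


section \<open>Clique number\<close>

definition num_S :: "letter list \<Rightarrow> nat" where
  "num_S w = length (filter (\<lambda>l. l = S) w)"

definition S_positions :: "letter list \<Rightarrow> nat set" where
  "S_positions w = {i. i < length w \<and> w ! i = S}"

lemma num_S_eq_card: "num_S w = card (S_positions w)"
  unfolding num_S_def S_positions_def by (rule length_filter_conv_card)

lemma num_S_rev: "num_S (rev w) = num_S w"
  unfolding num_S_def by (simp add: rev_filter[symmetric])

lemma num_S_le_length: "num_S w \<le> length w"
  unfolding num_S_def by (rule length_filter_le)

(* A clique containing a D-vertex x consists of x and S-vertices created after x;
   in particular it misses the first vertex 0, which is an S-vertex. *)
lemma clique_with_D_vertex:
  assumes clique: "is_clique (thr w) C" and x: "x \<in> C" "rev w ! x \<noteq> S"
  shows "C \<subseteq> insert x (S_positions (rev w) - {0})"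
proof
  fix y assume y: "y \<in> C"
  show "y \<in> insert x (S_positions (rev w) - {0})"
  proof (cases "y = x")
    case False
    then have y_S: "rev w ! max x y = S" "y < length w"
      using clique x y unfolding is_clique_def thr_adjacent by auto
    then have "x < y" using x(2) False by (auto simp: max_def split: if_splits)
    then show ?thesis using y_S unfolding S_positions_def by (auto simp: max_def)
  qed simp
qed

theorem clique_number_thr:
  assumes th: "threshold_word w"
  shows "clique_number (thr w) = num_S w"
proof -
  define Sv where "Sv = S_positions (rev w)"
  have fin: "finite Sv" unfolding Sv_def S_positions_def by simp
  have zero_in: "0 \<in> Sv"
    using th threshold_word_first_vertex[OF th] unfolding Sv_def S_positions_def threshold_word_def
    by simp
  have Sv_clique: "is_clique (thr w) Sv"
    unfolding is_clique_def thr_vertices thr_adjacent Sv_def S_positions_def by (auto simp: max_def)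
  have bound: "card C \<le> card Sv" if C: "is_clique (thr w) C" for C
  proof (cases "C \<subseteq> Sv")
    case True
    then show ?thesis using card_mono fin by blast
  next
    case False
    then obtain x where x: "x \<in> C" "x \<notin> Sv" by blast
    have "x < length w" using C x unfolding is_clique_def thr_vertices by auto
    then have "rev w ! x \<noteq> S" using x unfolding Sv_def S_positions_def by auto
    then have "card C \<le> card (insert x (Sv - {0}))"
      using clique_with_D_vertex[OF C x(1)] fin unfolding Sv_def by (intro card_mono) auto
    also have "\<dots> \<le> Suc (card (Sv - {0}))" by (simp add: card_insert_le_m1)
    also have "\<dots> = card Sv" using fin zero_in by (intro card_Suc_Diff1)
    finally show ?thesis .
  qed
  have "Max {card C |C. is_clique (thr w) C} = card Sv"
  proof (rule Max_eqI)
    show "finite {card C |C. is_clique (thr w) C}"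
      by (rule finite_subset[of _ "{..card Sv}"]) (auto dest: bound)
  qed (use bound Sv_clique in auto)
  then show ?thesis
    unfolding clique_number_def Sv_def num_S_eq_card[symmetric] num_S_rev .
qed


section \<open>Connectivity\<close>

lemma connected_on_dominating_vertex:
  assumes v: "v \<in> V" and dom: "\<And>a. a \<in> V \<Longrightarrow> a \<noteq> v \<Longrightarrow> E a v \<and> E v a"
  shows "connected_on E V"
proof -
  let ?P = "\<lambda>x y. x \<in> V \<and> y \<in> V \<and> E x y"
  have "?P\<^sup>*\<^sup>* a v \<and> ?P\<^sup>*\<^sup>* v a" if "a \<in> V" for a
    using v dom[OF that] that by (cases "a = v") auto
  then show ?thesis unfolding connected_on_def by (meson rtranclp_trans)
qed

lemma not_connected_on_isolated_vertex:
  assumes "x \<in> V" "y \<in> V" "x \<noteq> y" and isolated: "\<And>z. z \<in> V \<Longrightarrow> \<not> E z x"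
  shows "\<not> connected_on E V"
proof
  assume "connected_on E V"
  then have "(\<lambda>a b. a \<in> V \<and> b \<in> V \<and> E a b)\<^sup>*\<^sup>* y x"
    using assms unfolding connected_on_def by blast
  then show False using assms by (cases rule: rtranclp.cases) auto
qed

(* If some of the first k letters is a D, removing the fewer than k vertices added after it
   leaves that D-vertex as the last vertex, hence isolated. *)
lemma k_connected_thr_prefix_S:
  assumes th: "threshold_word w" and kc: "k_connected (thr w) k" and i: "i < k"
  shows "w ! i = S"
proof (rule ccontr)
  assume D: "w ! i \<noteq> S"
  define m where "m = length w"
  have km: "k \<le> m" using kc unfolding k_connected_def thr_vertices m_def by simp
  define X where "X = {m - i..<m}"
  have "X \<subseteq> fst (thr w)" "card X < k" using i km unfolding X_def thr_vertices m_def by auto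
  moreover have "fst (thr w) - X = {..<m - i}" unfolding thr_vertices X_def m_def by auto
  ultimately have conn: "connected_on (snd (thr w)) {..<m - i}"
    using kc unfolding k_connected_def by metis
  define x where "x = m - 1 - i"
  have x_D: "rev w ! x \<noteq> S" using D i km unfolding x_def m_def by (simp add: rev_nth Suc_diff_Suc)
  have "x \<noteq> 0" using x_D threshold_word_first_vertex[OF th] by metis
  moreover have "\<not> snd (thr w) z x" if "z \<in> {..<m - i}" for z
  proof -
    have "max z x = x" using that unfolding x_def by auto
    then show ?thesis using x_D unfolding thr_adjacent by auto
  qed
  ultimately have "\<not> connected_on (snd (thr w)) {..<m - i}"
    using i km by (intro not_connected_on_isolated_vertex[of x _ 0]) (auto simp: x_def)
  then show False using conn by contradiction
qed

(* Conversely, if the first k letters are S then the k last vertices are dominating, and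
   removing fewer than k vertices spares one of them. *)
lemma thr_k_connected:
  assumes km: "k \<le> length w" and prefix: "\<forall>i<k. w ! i = S"
  shows "k_connected (thr w) k"
  unfolding k_connected_def
proof (intro conjI allI impI)
  define m where "m = length w"
  have late_S: "rev w ! u = S" if "m - k \<le> u" "u < m" for u
  proof -
    have "rev w ! u = w ! (m - Suc u)" using that unfolding m_def by (simp add: rev_nth)
    moreover have "m - Suc u < k" using that km unfolding m_def by linarith
    ultimately show ?thesis using prefix by simp
  qed
  show "k \<le> card (fst (thr w))" using km by (simp add: thr_vertices)
  fix X assume X: "X \<subseteq> fst (thr w) \<and> card X < k"
  have "\<not> {m - k..<m} \<subseteq> X"
  proof
    assume "{m - k..<m} \<subseteq> X"
    then have "card {m - k..<m} \<le> card X"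
      using X by (intro card_mono) (auto simp: thr_vertices intro: finite_subset)
    then show False using X km unfolding m_def by simp
  qed
  then obtain v where v: "m - k \<le> v" "v < m" "v \<notin> X" by (auto simp: subset_iff)
  show "connected_on (snd (thr w)) (fst (thr w) - X)"
  proof (rule connected_on_dominating_vertex)
    show "v \<in> fst (thr w) - X" using v unfolding thr_vertices m_def by auto
    fix a assume a: "a \<in> fst (thr w) - X" "a \<noteq> v"
    then have "a < m" unfolding thr_vertices m_def by auto
    then have "rev w ! max a v = S" using late_S v by (auto simp: max_def)
    then show "snd (thr w) a v \<and> snd (thr w) v a"
      using a \<open>a < m\<close> v unfolding thr_adjacent m_def by (auto simp: max.commute)
  qed
qed

theorem k_connected_thr_iff:
  assumes "threshold_word w" and "k \<le> length w"
  shows "k_connected (thr w) k \<longleftrightarrow> (\<forall>i<k. w ! i = S)"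
  using assms k_connected_thr_prefix_S thr_k_connected by blast


definition threshold_words :: "nat \<Rightarrow> nat \<Rightarrow> nat \<Rightarrow> letter list set" where
  "threshold_words n d k =
     {w. threshold_word w \<and> length w = n \<and> (\<forall>i<k. w ! i = S) \<and> num_S w = d}"

lemma Tset_eq_threshold_words:
  assumes "k < d"
  shows "Tset n d k = threshold_words n d k"
proof (intro set_eqI)
  fix w
  show "w \<in> Tset n d k \<longleftrightarrow> w \<in> threshold_words n d k"
  proof (cases "threshold_word w \<and> num_S w = d")
    case True
    then have "k_connected (thr w) k \<longleftrightarrow> (\<forall>i<k. w ! i = S)"
      using assms num_S_le_length[of w] by (intro k_connected_thr_iff) auto
    then show ?thesis using True clique_number_thr unfolding Tset_def threshold_words_def by auto
  next
    case False
    then show ?thesis using clique_number_thr unfolding Tset_def threshold_words_def by auto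
  qed
qed


section \<open>Words from b-vectors\<close>

fun word_of_bvec :: "nat list \<Rightarrow> letter list" where
  "word_of_bvec [] = []"
| "word_of_bvec (b # bs) = replicate (b - 1) D @ S # word_of_bvec bs"

lemma length_blocks: "length (blocks a w) = num_S w"
  by (induction a w rule: blocks.induct) (auto simp: num_S_def)

lemma blocks_pos: "x \<in> set (blocks a w) \<Longrightarrow> 0 < x"
  by (induction a w rule: blocks.induct) auto

lemma blocks_hd: "blocks a w \<noteq> [] \<Longrightarrow> a + 1 \<le> hd (blocks a w)"
  by (induction a w rule: blocks.induct) auto

lemma sum_blocks: "w \<noteq> [] \<Longrightarrow> last w = S \<Longrightarrow> sum_list (blocks a w) = a + length w"
  by (induction a w rule: blocks.induct) (auto split: if_splits)

(* The accumulator a counts the D's already read in the current block. *)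
lemma word_of_bvec_blocks:
  "(w = [] \<and> a = 0) \<or> (w \<noteq> [] \<and> last w = S) \<Longrightarrow> word_of_bvec (blocks a w) = replicate a D @ w"
proof (induction a w rule: blocks.induct)
  case (2 acc w)
  then show ?case by (cases "w = []") auto
next
  case (3 acc w)
  then show ?case by (cases "w = []") (auto simp: replicate_append_same)
qed auto

lemma blocks_replicate_D: "blocks a (replicate c D @ S # u) = (a + c + 1) # blocks 0 u"
  by (induction c arbitrary: a) auto

lemma bvec_word_of_bvec: "\<forall>x\<in>set b. 0 < x \<Longrightarrow> bvec (word_of_bvec b) = b"
  unfolding bvec_def by (induction b) (auto simp: blocks_replicate_D)

lemma length_word_of_bvec: "\<forall>x\<in>set b. 0 < x \<Longrightarrow> length (word_of_bvec b) = sum_list b"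
  by (induction b) auto

lemma word_of_bvec_threshold: "b \<noteq> [] \<Longrightarrow> threshold_word (word_of_bvec b)"
proof (induction b)
  case (Cons x b)
  then show ?case by (cases b) (auto simp: threshold_word_def)
qed simp

lemma bvec_prefix_ones:
  assumes "k \<le> length (bvec w)"
  shows "(\<forall>i<k. bvec w ! i = 1) \<longleftrightarrow> (\<forall>i<k. w ! i = S)"
  using assms
proof (induction k arbitrary: w)
  case (Suc k)
  show ?case
  proof (cases w)
    case Nil
    then show ?thesis using Suc by (simp add: bvec_def)
  next
    case (Cons l w')
    show ?thesis
    proof (cases l)
      case S
      then show ?thesis using Suc Cons by (simp add: bvec_def All_less_Suc2)
    next
      case D
      have ne: "blocks 1 w' \<noteq> []" using Suc Cons D by (auto simp: bvec_def)
      have "2 \<le> hd (blocks 1 w')" using blocks_hd[OF ne] by simp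
      then have "bvec w ! 0 \<noteq> 1" using ne Cons D by (simp add: bvec_def hd_conv_nth)
      then show ?thesis using Cons D by (auto simp: All_less_Suc2)
    qed
  qed
qed simp

lemma bvec_in_Bset:
  assumes "k < d" and w: "w \<in> threshold_words n d k"
  shows "bvec w \<in> Bset n d k"
proof -
  have th: "w \<noteq> []" "last w = S" "length w = n" "\<forall>i<k. w ! i = S" "num_S w = d"
    using w unfolding threshold_words_def threshold_word_def by auto
  have len: "length (bvec w) = d" using th by (simp add: bvec_def length_blocks)
  have "\<forall>i<d. 0 < bvec w ! i" using len blocks_pos unfolding bvec_def by (metis nth_mem)
  moreover have "sum_list (bvec w) = n" using th sum_blocks unfolding bvec_def by simp
  moreover have "\<forall>i<k. bvec w ! i = 1" using bvec_prefix_ones[of k w] len assms th by simp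
  ultimately show ?thesis unfolding Bset_def using len by simp
qed

lemma Bset_pos: "b \<in> Bset n d k \<Longrightarrow> \<forall>x\<in>set b. 0 < x"
  by (auto simp: Bset_def in_set_conv_nth)

lemma word_of_bvec_in_threshold_words:
  assumes "k < d" and b: "b \<in> Bset n d k"
  shows "word_of_bvec b \<in> threshold_words n d k"
proof -
  define w where "w = word_of_bvec b"
  have pos: "\<forall>x\<in>set b. 0 < x" using b by (rule Bset_pos)
  have bw: "bvec w = b" using pos unfolding w_def by (rule bvec_word_of_bvec)
  have b_props: "length b = d" "sum_list b = n" "\<forall>i<k. b ! i = 1" using b unfolding Bset_def by auto
  have "b \<noteq> []" using b_props assms by auto
  then have "threshold_word w" unfolding w_def by (rule word_of_bvec_threshold)
  moreover have "length w = n" using length_word_of_bvec[OF pos] b_props unfolding w_def by simp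
  moreover have "\<forall>i<k. w ! i = S" using bvec_prefix_ones[of k w] bw b_props assms by simp
  moreover have "num_S w = d" using bw b_props length_blocks[of 0 w] unfolding bvec_def by simp
  ultimately show ?thesis unfolding threshold_words_def w_def by simp
qed

theorem bij_bvec_threshold_words:
  assumes "k < d"
  shows "bij_betw bvec (threshold_words n d k) (Bset n d k)"
proof (rule bij_betw_byWitness[where f' = word_of_bvec])
  show "\<forall>w\<in>threshold_words n d k. word_of_bvec (bvec w) = w"
    using word_of_bvec_blocks[of _ 0] unfolding threshold_words_def threshold_word_def bvec_def
    by simp
  show "\<forall>b\<in>Bset n d k. bvec (word_of_bvec b) = b"
    using Bset_pos bvec_word_of_bvec by blast
qed (use assms bvec_in_Bset word_of_bvec_in_threshold_words in auto)


section \<open>Counting\<close>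

(* The d-subsets of U containing a fixed set F correspond to the (d - |F|)-subsets of U - F. *)
lemma card_supersets:
  assumes U: "finite U" and F: "F \<subseteq> U" "card F \<le> d"
  shows "card {A. F \<subseteq> A \<and> A \<subseteq> U \<and> card A = d} = (card U - card F) choose (d - card F)"
proof -
  have finF: "finite F" using U F finite_subset by blast
  define Bs where "Bs = {B. B \<subseteq> U - F \<and> card B = d - card F}"
  have card_union: "card (B \<union> F) = card B + card F" if "B \<subseteq> U - F" for B
    using that U finF by (intro card_Un_disjoint) (auto intro: finite_subset)
  have "{A. F \<subseteq> A \<and> A \<subseteq> U \<and> card A = d} = (\<lambda>B. B \<union> F) ` Bs"
  proof (intro equalityI subsetI)
    fix A assume A: "A \<in> {A. F \<subseteq> A \<and> A \<subseteq> U \<and> card A = d}"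
    then have "card (A - F) = d - card F" using finF by (simp add: card_Diff_subset)
    then have "A - F \<in> Bs" using A unfolding Bs_def by auto
    moreover have "A = (A - F) \<union> F" using A by auto
    ultimately show "A \<in> (\<lambda>B. B \<union> F) ` Bs" by blast
  qed (use F card_union in \<open>auto simp: Bs_def\<close>)
  moreover have "inj_on (\<lambda>B. B \<union> F) Bs"
    by (rule inj_on_inverseI[where g = "\<lambda>A. A - F"]) (auto simp: Bs_def)
  ultimately have "card {A. F \<subseteq> A \<and> A \<subseteq> U \<and> card A = d} = card Bs"
    by (simp add: card_image)
  also have "\<dots> = card (U - F) choose (d - card F)"
    unfolding Bs_def using U by (intro n_subsets) simp
  finally show ?thesis using finF F by (simp add: card_Diff_subset)
qed

definition word_of_positions :: "nat \<Rightarrow> nat set \<Rightarrow> letter list" where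
  "word_of_positions n A = map (\<lambda>i. if i \<in> A then S else D) [0..<n]"

lemma S_positions_word_of_positions:
  "A \<subseteq> {..<n} \<Longrightarrow> S_positions (word_of_positions n A) = A"
  unfolding S_positions_def word_of_positions_def by (auto split: if_splits)

lemma word_of_positions_S_positions:
  "word_of_positions (length w) (S_positions w) = w"
proof (rule nth_equalityI)
  fix i assume "i < length (word_of_positions (length w) (S_positions w))"
  then show "word_of_positions (length w) (S_positions w) ! i = w ! i"
    unfolding word_of_positions_def S_positions_def by (cases "w ! i") auto
qed (simp add: word_of_positions_def)

lemma threshold_words_by_S_positions:
  assumes "k < n"
  shows "threshold_words n d k =
    {w. length w = n \<and> S_positions w \<in> {A. insert (n - 1) {..<k} \<subseteq> A \<and> A \<subseteq> {..<n} \<and> card A = d}}"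
proof -
  have "threshold_word w \<longleftrightarrow> n - 1 \<in> S_positions w" if "length w = n" for w
  proof -
    have "w \<noteq> []" using that assms by auto
    then show ?thesis using that assms unfolding threshold_word_def S_positions_def
      by (simp add: last_conv_nth)
  qed
  then show ?thesis
    using assms unfolding threshold_words_def num_S_eq_card
    by (auto simp: S_positions_def)
qed

theorem card_threshold_words:
  assumes "k < d" "d \<le> n"
  shows "card (threshold_words n d k) = (n - k - 1) choose (d - k - 1)"
proof -
  define F where "F = insert (n - 1) {..<k}"
  define Q where "Q = {A. F \<subseteq> A \<and> A \<subseteq> {..<n} \<and> card A = d}"
  have W: "threshold_words n d k = {w. length w = n \<and> S_positions w \<in> Q}"
    using threshold_words_by_S_positions assms unfolding Q_def F_def by simp
  have "S_positions ` {w. length w = n \<and> S_positions w \<in> Q} = Q"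
  proof (intro equalityI subsetI)
    fix A assume "A \<in> Q"
    then have "A = S_positions (word_of_positions n A)" "length (word_of_positions n A) = n"
      using S_positions_word_of_positions unfolding Q_def word_of_positions_def by auto
    then show "A \<in> S_positions ` {w. length w = n \<and> S_positions w \<in> Q}"
      using \<open>A \<in> Q\<close> by (intro image_eqI[of _ _ "word_of_positions n A"]) auto
  qed auto
  moreover have "inj_on S_positions {w. length w = n \<and> S_positions w \<in> Q}"
    by (rule inj_on_inverseI[where g = "word_of_positions n"])
       (metis (mono_tags) mem_Collect_eq word_of_positions_S_positions)
  ultimately have "card (threshold_words n d k) = card Q" unfolding W by (metis card_image)
  also have "\<dots> = (n - (k + 1)) choose (d - (k + 1))"
  proof -
    have "card F = k + 1" using assms unfolding F_def by simp
    then show ?thesis using assms unfolding Q_def F_def by (subst card_supersets) auto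
  qed
  finally show ?thesis by simp
qed


theorem mainTheorem4:
  fixes n d k :: nat
  assumes "k < d" and "d \<le> n"
  shows "bij_betw bvec (Tset n d k) (Bset n d k)
    \<and> card (Tset n d k) = (n - k - 1) choose (d - k - 1)
    \<and> card (Bset n d k) = (n - k - 1) choose (d - k - 1)"
proof -
  have T: "Tset n d k = threshold_words n d k"
    using Tset_eq_threshold_words[OF assms(1)] .
  have bij: "bij_betw bvec (Tset n d k) (Bset n d k)"
    unfolding T using bij_bvec_threshold_words[OF assms(1)] .
  have card_T: "card (Tset n d k) = (n - k - 1) choose (d - k - 1)"
    unfolding T using card_threshold_words[OF assms] .
  moreover have "card (Bset n d k) = card (Tset n d k)"
    using bij_betw_same_card[OF bij] by simp
  ultimately show ?thesis using bij by simp
qed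

end
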